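(* Let $Y$ be lattice-valued with span $d$. Let $\tau_0>0$ be such that $h(\tau_0)\in(\beta_X,\infty)$ and $\inf_{s\in\mathbb{R}}E[e^{\tau_0Y+sX}]<1$. Suppose: (1) the law of $X$ is the sum of two nonnegative measures $\Phi,\Psi$ with $\Phi(\mathbb{R})>0$ and $\Phi$ having a density in $C^2(\mathbb{R})$; (2) there exist $k\in\mathbb{N}$ and $\eta_0>0$ such that $E|E[e^{is(Y_1+\cdots+Y_k)}\mid X_1+\cdots+X_k]|<1$ for all $s\in(0,\pi/d]$, and $E[e^{-h(\tau_0)X+\tau_0Y+\eta_0(|X|+|Y|)}]<\infty$; (3) $g(t,x),\partial_xg(t,x),\partial_x^2g(t,x)$ are continuous on $(\tau_0-\eta_0,\tau_0+\eta_0)\times\operatorname{sppt}(\Phi)^\circ$; (4) if $\Pr\{X\ge0\}<1$, then $E[e^{q(\tau_0Y-(0\wedge h(\tau_0))X)}\mid X>0]<\infty$ for all $q>0$. Then for all sufficiently large $x$, $W(x)$ is lattice-valued with span $d$.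
   Context: $(X_n,Y_n)_{n\ge1}$ are i.i.d. copies of $(X,Y)\in\mathbb{R}^2$; throughout $X,Y$ are nondegenerate and $\Pr\{\sup_{n\ge1}\sum_{i=1}^nX_i=\infty\}=1$. For $x\ge0$, $N(x)=\max\{n:\sum_{i=1}^kX_i\le x\ \forall k\le n\}$ if $X_1\le x$, else $N(x)=0$; $W(x)=\sum_{i=1}^{N(x)}Y_i$. A random variable $\xi$ has span $d>0$ if $d=\max\{t>0:\Pr\{\xi\in t\mathbb{Z}\}=1\}$. $g(t,x)=E[e^{tY}\mid X=x]$. $\mathcal{D}_t=\{s:E[e^{tY-sX}]\le1\}$, $h(t)=\inf\mathcal{D}_t$, $\beta_X=\limsup_{x\to\infty}\frac1x\log\Pr\{X>x\}$. $\operatorname{sppt}$ is support, $A^\circ$ interior. *)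

theory Defs
  imports "HOL-Probability.Probability"
begin

definition psum :: "(nat \<Rightarrow> 'a \<Rightarrow> real) \<Rightarrow> nat \<Rightarrow> 'a \<Rightarrow> real" where
  "psum Z n \<omega> = (\<Sum>i\<in>{1..n}. Z i \<omega>)"

definition firstN :: "(nat \<Rightarrow> 'a \<Rightarrow> real) \<Rightarrow> real \<Rightarrow> 'a \<Rightarrow> nat" where
  "firstN Xs x \<omega> = (if Xs 1 \<omega> \<le> x then (GREATEST n. \<forall>k\<in>{1..n}. psum Xs k \<omega> \<le> x) else 0)"

definition Wsum :: "(nat \<Rightarrow> 'a \<Rightarrow> real) \<Rightarrow> (nat \<Rightarrow> 'a \<Rightarrow> real) \<Rightarrow> real \<Rightarrow> 'a \<Rightarrow> real" where
  "Wsum Xs Ys x \<omega> = (\<Sum>i\<in>{1..firstN Xs x \<omega>}. Ys i \<omega>)"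

definition lattice_ok :: "'a measure \<Rightarrow> ('a \<Rightarrow> real) \<Rightarrow> real \<Rightarrow> bool" where
  "lattice_ok M \<xi> t \<longleftrightarrow> t > 0 \<and> (AE \<omega> in M. \<exists>k::int. \<xi> \<omega> = t * of_int k)"

definition has_span :: "'a measure \<Rightarrow> ('a \<Rightarrow> real) \<Rightarrow> real \<Rightarrow> bool" where
  "has_span M \<xi> d \<longleftrightarrow> lattice_ok M \<xi> d \<and> (\<forall>t. lattice_ok M \<xi> t \<longrightarrow> t \<le> d)"

definition Dset :: "'a measure \<Rightarrow> ('a \<Rightarrow> real) \<Rightarrow> ('a \<Rightarrow> real) \<Rightarrow> real \<Rightarrow> real set" where
  "Dset M X Y t = {s. (\<integral>\<^sup>+ \<omega>. ennreal (exp (t * Y \<omega> - s * X \<omega>)) \<partial>M) \<le> 1}"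

definition hfun :: "'a measure \<Rightarrow> ('a \<Rightarrow> real) \<Rightarrow> ('a \<Rightarrow> real) \<Rightarrow> real \<Rightarrow> ereal" where
  "hfun M X Y t = Inf (ereal ` Dset M X Y t)"

definition betaX :: "'a measure \<Rightarrow> ('a \<Rightarrow> real) \<Rightarrow> ereal" where
  "betaX M X = Limsup at_top (\<lambda>x::real.
      if measure M {\<omega> \<in> space M. X \<omega> > x} = 0 then -\<infinity>
      else ereal (ln (measure M {\<omega> \<in> space M. X \<omega> > x}) / x))"

definition msupport :: "real measure \<Rightarrow> real set" where
  "msupport \<Phi> = {x. \<forall>e>0. emeasure \<Phi> (ball x e) > 0}"

definition cond_exp_event :: "'a measure \<Rightarrow> ('a \<Rightarrow> real) \<Rightarrow> 'a set \<Rightarrow> ennreal" where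
  "cond_exp_event M f A = (\<integral>\<^sup>+ \<omega>. indicator A \<omega> * ennreal (f \<omega>) \<partial>M) / emeasure M A"

definition cond_version :: "'a measure \<Rightarrow> ('a \<Rightarrow> real) \<Rightarrow> ('a \<Rightarrow> real) \<Rightarrow> (real \<Rightarrow> real) \<Rightarrow> bool" where
  "cond_version M X f g \<longleftrightarrow> g \<in> borel_measurable borel \<and> (AE \<omega> in M. g (X \<omega>) \<ge> 0) \<and>
     (\<forall>A\<in>sets borel.
        (\<integral>\<^sup>+ \<omega>. indicator (X -` A \<inter> space M) \<omega> * ennreal (f \<omega>) \<partial>M) =
        (\<integral>\<^sup>+ \<omega>. indicator (X -` A \<inter> space M) \<omega> * ennreal (g (X \<omega>)) \<partial>M))"

end

theory Submission
  imports Defs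
begin

text \<open>
  Write \<open>S\<^sub>n = X\<^sub>1 + \<dots> + X\<^sub>n\<close>. Every \<open>Y\<^sub>i\<close> lives on the lattice \<open>d\<int>\<close>, hence so does
  \<open>W(x)\<close>. If \<open>W(x)\<close> also lived on \<open>t\<int>\<close> for some \<open>t > d\<close>, some frequency
  \<open>s \<in> [\<pi>/(2d), \<pi>/d]\<close> would satisfy \<open>cos (s W(x)) = 1\<close> almost surely. On the event that
  \<open>S\<^sub>1, \<dots>, S\<^sub>k \<le> x\<close>, \<open>W(x)\<close> equals \<open>Y\<^sub>1 + \<dots> + Y\<^sub>k\<close> plus the same functional of the
  shifted pairs \<open>(X\<^sub>k\<^sub>+\<^sub>i, Y\<^sub>k\<^sub>+\<^sub>i)\<close> at level \<open>x - S\<^sub>k\<close>, and the shifted pairs are independent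
  of the first \<open>k\<close> pairs. Conditioning on \<open>S\<^sub>k\<close> and Cauchy-Schwarz then give
  \<open>1 - 2 Pr{S\<^sub>j > x for some j \<le> k} \<le> E|E[exp(is(Y\<^sub>1 + \<dots> + Y\<^sub>k)) | S\<^sub>k]|\<close>.
  By hypothesis (2) the right-hand side is below 1 for \<open>s \<in> (0, \<pi>/d]\<close>, and it is continuous
  in \<open>s\<close>, so on the compact range of \<open>s\<close> it is at most some \<open>c < 1\<close>; the probability on the
  left tends to 0 as \<open>x \<rightarrow> \<infinity>\<close>. Only the span of \<open>Y\<close>, the i.i.d. structure, the drift
  \<open>sup\<^sub>n S\<^sub>n = \<infinity>\<close> and the first clause of (2) are used.
\<close>

section \<open>Lattice-valued variables\<close>

lemma sets_borel_lattice: "{x \<in> space borel. \<exists>k::int. x = (d::real) * of_int k} \<in> sets borel"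
proof -
  have "{x \<in> space borel. \<exists>k::int. x = d * of_int k} = (\<Union>k::int. {d * of_int k})" by auto
  also have "\<dots> \<in> sets borel" by (rule sets.countable_UN) auto
  finally show ?thesis .
qed

lemma sum_in_lattice:
  assumes "\<forall>i\<in>A. \<exists>k::int. f i = d * of_int k"
  shows "\<exists>k::int. (\<Sum>i\<in>A. f i) = (d::real) * of_int k"
proof -
  from assms obtain g where "\<forall>i\<in>A. f i = d * of_int (g i)" by metis
  then have "(\<Sum>i\<in>A. f i) = d * of_int (\<Sum>i\<in>A. g i)" by (simp add: sum_distrib_left)
  then show ?thesis by blast
qed

lemma AE_distr_eq_transfer:
  assumes "distr M N Z = distr M N Y" "Z \<in> measurable M N" "Y \<in> measurable M N"
    and "{x \<in> space N. P x} \<in> sets N" and "AE \<omega> in M. P (Y \<omega>)"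
  shows "AE \<omega> in M. P (Z \<omega>)"
proof -
  have "AE x in distr M N Y. P x" using assms(3-5) by (subst AE_distr_iff) auto
  then have "AE x in distr M N Z. P x" by (simp only: assms(1))
  then show ?thesis using assms(2,4) by (subst (asm) AE_distr_iff) auto
qed

lemma AE_identically_distributed_lattice:
  fixes X Y :: "'a \<Rightarrow> real" and Xs Ys :: "nat \<Rightarrow> 'a \<Rightarrow> real"
  assumes [measurable]: "X \<in> borel_measurable M" "Y \<in> borel_measurable M"
      "\<And>i. Xs i \<in> borel_measurable M" "\<And>i. Ys i \<in> borel_measurable M"
    and ident: "\<And>i. i \<ge> 1 \<Longrightarrow>
        distr M borel (\<lambda>\<omega>. (Xs i \<omega>, Ys i \<omega>)) = distr M borel (\<lambda>\<omega>. (X \<omega>, Y \<omega>))"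
    and lattice: "AE \<omega> in M. \<exists>k::int. Y \<omega> = d * of_int k"
  shows "AE \<omega> in M. \<forall>i\<in>{1..}. \<exists>k::int. Ys i \<omega> = d * of_int k"
proof -
  have [measurable]: "snd \<in> borel_measurable (borel :: (real \<times> real) measure)"
    by (intro borel_measurable_continuous_onI continuous_intros)
  have "AE \<omega> in M. \<exists>k::int. Ys i \<omega> = d * of_int k" if "i \<ge> 1" for i
  proof (rule AE_distr_eq_transfer[OF _ _ _ sets_borel_lattice lattice])
    have "distr M borel (Ys i) = distr (distr M borel (\<lambda>\<omega>. (Xs i \<omega>, Ys i \<omega>))) borel snd"
      by (subst distr_distr) (auto simp: comp_def)
    also have "\<dots> = distr (distr M borel (\<lambda>\<omega>. (X \<omega>, Y \<omega>))) borel snd"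
      using ident[OF that] by simp
    also have "\<dots> = distr M borel Y"
      by (subst distr_distr) (auto simp: comp_def)
    finally show "distr M borel (Ys i) = distr M borel Y" .
  qed auto
  then show ?thesis by (subst AE_ball_countable) auto
qed

lemma nat_multiple_between:
  fixes a u :: real
  assumes "0 < u" "u \<le> 2 * a"
  shows "\<exists>m::nat. a \<le> m * u \<and> m * u \<le> 2 * a"
proof (cases "u \<le> a")
  case True
  define m where "m = nat \<lceil>a / u\<rceil>"
  have "real m = of_int \<lceil>a / u\<rceil>"
    using assms True unfolding m_def by (simp add: divide_nonneg_pos)
  then have "a / u \<le> m" "m < a / u + 1" by linarith+
  then have "a \<le> m * u" "m * u < a + u"
    using assms(1) by (simp_all add: field_simps)
  then show ?thesis using True by (intro exI[of _ m]) simp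
next
  case False
  then show ?thesis using assms by (intro exI[of _ 1]) simp
qed

lemma frequency_annihilating_two_lattices:
  fixes W :: "'a \<Rightarrow> real"
  assumes "0 < d" "d < t"
    and lattice_t: "AE \<omega> in M. \<exists>k::int. W \<omega> = t * of_int k"
    and lattice_d: "AE \<omega> in M. \<exists>k::int. W \<omega> = d * of_int k"
  shows "\<exists>s\<in>{pi / (2 * d)..pi / d}. AE \<omega> in M. cos (s * W \<omega>) = 1"
proof -
  define u where "u = 2 * pi / t"
  define v where "v = 2 * pi / d"
  have "0 < u" "u < v"
    using assms(1,2) unfolding u_def v_def by (simp_all add: frac_less2)
  \<comment> \<open>Both \<open>u\<close> and \<open>v\<close> map \<open>W\<close> into \<open>2\<pi>\<int>\<close>, hence so does \<open>u'\<close>, which lies in \<open>(0, \<pi>/d]\<close>.\<close>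
  define u' where "u' = (if u \<le> pi / d then u else v - u)"
  have u': "0 < u'" "u' \<le> 2 * (pi / (2 * d))"
    using \<open>0 < u\<close> \<open>u < v\<close> unfolding u'_def v_def by auto
  obtain m :: nat where m: "pi / (2 * d) \<le> m * u'" "m * u' \<le> 2 * (pi / (2 * d))"
    using nat_multiple_between[OF u'] by blast
  have "AE \<omega> in M. \<exists>n::int. u' * W \<omega> = 2 * pi * of_int n"
    using lattice_t lattice_d
  proof eventually_elim
    case (elim \<omega>)
    then obtain k1 k2 :: int where k1: "W \<omega> = t * k1" and k2: "W \<omega> = d * k2" by blast
    have "u * W \<omega> = 2 * pi * k1" using k1 assms(1,2) unfolding u_def by simp
    moreover have "v * W \<omega> = 2 * pi * k2" using k2 assms(1) unfolding v_def by simp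
    ultimately have "u' * W \<omega> = 2 * pi * k1 \<or> u' * W \<omega> = 2 * pi * of_int (k2 - k1)"
      unfolding u'_def by (simp add: algebra_simps)
    then show ?case by blast
  qed
  then have "AE \<omega> in M. cos (m * u' * W \<omega>) = 1"
  proof eventually_elim
    case (elim \<omega>)
    then obtain n :: int where "u' * W \<omega> = 2 * pi * of_int n" by blast
    then have "m * u' * W \<omega> = 2 * pi * of_int (int m * n)" by (simp add: mult.assoc)
    then show ?case by (metis cos_int_2pin)
  qed
  then show ?thesis using m by auto
qed

section \<open>The renewal decomposition of \<open>W\<close>\<close>

lemma psum_cong:
  assumes "\<And>i. i \<ge> 1 \<Longrightarrow> Z i \<omega> = Z' i \<omega>'"
  shows "psum Z n \<omega> = psum Z' n \<omega>'"
  unfolding psum_def using assms by (intro sum.cong) auto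

lemma firstN_eq_Greatest: "firstN Xs x \<omega> = (GREATEST n. \<forall>j\<in>{1..n}. psum Xs j \<omega> \<le> x)"
proof (cases "Xs 1 \<omega> \<le> x")
  case False
  have "(GREATEST n. \<forall>j\<in>{1..n}. psum Xs j \<omega> \<le> x) = 0"
  proof (rule Greatest_equality)
    fix n assume n: "\<forall>j\<in>{1..n}. psum Xs j \<omega> \<le> x"
    show "n \<le> 0"
    proof (rule ccontr)
      assume "\<not> n \<le> 0"
      then show False using n[rule_format, of 1] False by (simp add: psum_def)
    qed
  qed simp
  then show ?thesis using False unfolding firstN_def by simp
qed (simp add: firstN_def)

lemma Wsum_cong:
  assumes "\<And>i. i \<ge> 1 \<Longrightarrow> Z i \<omega> = Z' i \<omega>'" "\<And>i. i \<ge> 1 \<Longrightarrow> U i \<omega> = U' i \<omega>'"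
  shows "Wsum Z U y \<omega> = Wsum Z' U' y \<omega>'"
proof -
  have "psum Z n \<omega> = psum Z' n \<omega>'" for n by (rule psum_cong) (rule assms(1))
  then have "firstN Z y \<omega> = firstN Z' y \<omega>'" unfolding firstN_eq_Greatest by presburger
  then show ?thesis unfolding Wsum_def using assms(2) by (intro sum.cong) auto
qed

lemma psum_shift: "psum (\<lambda>i. Z (k + i)) m \<omega> = psum Z (k + m) \<omega> - psum Z k \<omega>"
proof -
  have "psum Z (k + m) \<omega> = psum Z k \<omega> + (\<Sum>i\<in>{k+1..k+m}. Z i \<omega>)"
    unfolding psum_def by (rule sum.ub_add_nat) simp
  also have "(\<Sum>i\<in>{k+1..k+m}. Z i \<omega>) = (\<Sum>i\<in>{1..m}. Z (k + i) \<omega>)"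
    using sum.shift_bounds_cl_nat_ivl[of "\<lambda>i. Z i \<omega>" 1 k m] by (simp add: add.commute)
  finally show ?thesis unfolding psum_def by simp
qed

lemma Greatest_nat_shift:
  fixes P Q :: "nat \<Rightarrow> bool"
  assumes "P k" and shift: "\<And>m. P (k + m) \<longleftrightarrow> Q m" and bound: "\<And>n. P n \<Longrightarrow> n \<le> b"
  shows "Greatest P = k + Greatest Q"
proof (rule Greatest_equality)
  have Q_bound: "Q m \<Longrightarrow> m \<le> b" for m using bound[of "k + m"] shift[of m] by simp
  have "Q 0" using \<open>P k\<close> shift[of 0] by simp
  then show "P (k + Greatest Q)" using shift GreatestI_nat Q_bound by blast
  fix n assume "P n"
  show "n \<le> k + Greatest Q"
  proof (cases "n \<le> k")
    case False
    then have "Q (n - k)" using \<open>P n\<close> shift[of "n - k"] by simp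
    then show ?thesis using Greatest_le_nat[OF _ Q_bound] by fastforce
  qed simp
qed

lemma Wsum_split:
  assumes below: "\<forall>j\<in>{1..k}. psum Xs j \<omega> \<le> x" and "n0 \<ge> 1" "x < psum Xs n0 \<omega>"
  shows "Wsum Xs Ys x \<omega> = psum Ys k \<omega> + Wsum (\<lambda>i. Xs (k + i)) (\<lambda>i. Ys (k + i)) (x - psum Xs k \<omega>) \<omega>"
proof -
  have "firstN Xs x \<omega> = k + firstN (\<lambda>i. Xs (k + i)) (x - psum Xs k \<omega>) \<omega>"
    unfolding firstN_eq_Greatest
  proof (rule Greatest_nat_shift[where b = n0])
    show "(\<forall>j\<in>{1..k + m}. psum Xs j \<omega> \<le> x) \<longleftrightarrow>
        (\<forall>j\<in>{1..m}. psum (\<lambda>i. Xs (k + i)) j \<omega> \<le> x - psum Xs k \<omega>)" for m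
    proof
      assume shifted: "\<forall>j\<in>{1..m}. psum (\<lambda>i. Xs (k + i)) j \<omega> \<le> x - psum Xs k \<omega>"
      show "\<forall>j\<in>{1..k + m}. psum Xs j \<omega> \<le> x"
      proof
        fix j assume j: "j \<in> {1..k + m}"
        show "psum Xs j \<omega> \<le> x"
        proof (cases "j \<le> k")
          case False
          then have "j - k \<in> {1..m}" "k + (j - k) = j" using j by auto
          then show ?thesis using shifted psum_shift[of Xs k "j - k" \<omega>] by force
        qed (use below j in auto)
      qed
    qed (auto simp: psum_shift)
    show "n \<le> n0" if "\<forall>j\<in>{1..n}. psum Xs j \<omega> \<le> x" for n
      using that assms(2,3) by force
  qed (use below in simp)
  then show ?thesis
    unfolding Wsum_def using psum_shift[of Ys k] by (simp add: psum_def)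
qed

lemma psum_measurable [measurable]:
  assumes [measurable]: "\<And>i. Z i \<in> borel_measurable N"
  shows "psum Z n \<in> borel_measurable N"
  unfolding psum_def by measurable

lemma Greatest_nat_infinite:
  assumes "infinite {n::nat. P n}"
  shows "Greatest P = (GREATEST n::nat. False)"
proof -
  have "\<not> (P x \<and> (\<forall>y. P y \<longrightarrow> y \<le> x))" for x
    using assms finite_nat_set_iff_bounded_le by auto
  then show ?thesis unfolding Greatest_def by (intro arg_cong[where f = The] ext) blast
qed

lemma firstN_measurable:
  assumes [measurable]: "\<And>i. Z i \<in> borel_measurable N" "y \<in> borel_measurable N"
  shows "(\<lambda>\<omega>. firstN Z (y \<omega>) \<omega>) \<in> measurable N (count_space UNIV)"
proof -
  define P where "P n \<omega> \<longleftrightarrow> (\<forall>j\<in>{1..n}. psum Z j \<omega> \<le> y \<omega>)" for n \<omega>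
  have [measurable]: "Measurable.pred N (P n)" for n unfolding P_def by measurable
  have "firstN Z (y \<omega>) \<omega> = (if finite {n. P n \<omega>} then Max {n. P n \<omega>} else (GREATEST n::nat. False))" for \<omega>
  proof -
    have "P 0 \<omega>" unfolding P_def by simp
    then show ?thesis
      unfolding firstN_eq_Greatest P_def[symmetric]
      using Greatest_Max[of "\<lambda>n. P n \<omega>"] Greatest_nat_infinite[of "\<lambda>n. P n \<omega>"] by auto
  qed
  then show ?thesis by simp
qed

lemma Wsum_measurable:
  assumes [measurable]: "\<And>i. Z i \<in> borel_measurable N" "\<And>i. U i \<in> borel_measurable N"
    "y \<in> borel_measurable N"
  shows "(\<lambda>\<omega>. Wsum Z U (y \<omega>) \<omega>) \<in> borel_measurable N"
proof -
  have "(\<lambda>\<omega>. (\<lambda>n \<omega>. \<Sum>i\<in>{1..n}. U i \<omega>) (firstN Z (y \<omega>) \<omega>) \<omega>) \<in> borel_measurable N"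
    by (rule measurable_compose_countable[OF _ firstN_measurable]) auto
  then show ?thesis unfolding Wsum_def by simp
qed

lemma Wsum_snd_measurable:
  assumes "\<And>i. Z i \<in> borel_measurable M" "\<And>i. U i \<in> borel_measurable M"
    and "y \<in> borel_measurable (N \<Otimes>\<^sub>M M)"
  shows "(\<lambda>p. Wsum Z U (y p) (snd p)) \<in> borel_measurable (N \<Otimes>\<^sub>M M)"
proof -
  have "(\<lambda>p. Wsum (\<lambda>i p. Z i (snd p)) (\<lambda>i p. U i (snd p)) (y p) p) \<in> borel_measurable (N \<Otimes>\<^sub>M M)"
    using assms by (intro Wsum_measurable measurable_compose[OF measurable_snd])
  moreover have "Wsum (\<lambda>i p. Z i (snd p)) (\<lambda>i p. U i (snd p)) (y p) p = Wsum Z U (y p) (snd p)" for p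
    by (rule Wsum_cong) auto
  ultimately show ?thesis by simp
qed

lemma (in prob_space) integral_indep_var_iterated:
  fixes f :: "'b \<Rightarrow> 'b \<Rightarrow> real"
  assumes ind: "indep_var N1 V N2 T"
    and f_measurable: "(\<lambda>p. f (fst p) (snd p)) \<in> borel_measurable (N1 \<Otimes>\<^sub>M N2)"
    and f_bounded: "\<And>a b. \<bar>f a b\<bar> \<le> C"
  shows "(\<integral>\<omega>. f (V \<omega>) (T \<omega>) \<partial>M) = (\<integral>\<omega>. (\<integral>\<omega>'. f (V \<omega>) (T \<omega>') \<partial>M) \<partial>M)"
proof -
  have V: "V \<in> measurable M N1" and T: "T \<in> measurable M N2"
    and joint: "distr M N1 V \<Otimes>\<^sub>M distr M N2 T = distr M (N1 \<Otimes>\<^sub>M N2) (\<lambda>x. (V x, T x))"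
    using ind unfolding indep_var_distribution_eq by auto
  interpret PV: prob_space "distr M N1 V" by (rule prob_space_distr[OF V])
  interpret PT: prob_space "distr M N2 T" by (rule prob_space_distr[OF T])
  interpret PVT: pair_prob_space "distr M N1 V" "distr M N2 T" ..
  have "sets (distr M N1 V \<Otimes>\<^sub>M distr M N2 T) = sets (N1 \<Otimes>\<^sub>M N2)"
    by (intro sets_pair_measure_cong) auto
  then have "(\<lambda>p. f (fst p) (snd p)) \<in> borel_measurable (distr M N1 V \<Otimes>\<^sub>M distr M N2 T)"
    using f_measurable by (subst measurable_cong_sets) auto
  then have f_measurable': "case_prod f \<in> borel_measurable (distr M N1 V \<Otimes>\<^sub>M distr M N2 T)"
    by (simp add: case_prod_beta')
  have f_integrable: "integrable (distr M N1 V \<Otimes>\<^sub>M distr M N2 T) (case_prod f)"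
    using f_bounded f_measurable' by (intro PVT.integrable_const_bound[where B=C]) auto
  have "(\<integral>\<omega>. f (V \<omega>) (T \<omega>) \<partial>M) = integral\<^sup>L (distr M (N1 \<Otimes>\<^sub>M N2) (\<lambda>x. (V x, T x))) (case_prod f)"
    using f_measurable measurable_Pair[OF V T] by (subst integral_distr) (auto simp: case_prod_beta')
  also have "\<dots> = integral\<^sup>L (distr M N1 V \<Otimes>\<^sub>M distr M N2 T) (case_prod f)"
    using joint by simp
  also have "\<dots> = (\<integral>v. (\<integral>\<tau>. f v \<tau> \<partial>distr M N2 T) \<partial>distr M N1 V)"
    using PVT.integral_fst'[OF f_integrable] by simp
  also have "\<dots> = (\<integral>\<omega>. (\<integral>\<tau>. f (V \<omega>) \<tau> \<partial>distr M N2 T) \<partial>M)"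
  proof (rule integral_distr[OF V])
    have "(\<lambda>v. \<integral>\<tau>. f v \<tau> \<partial>distr M N2 T) \<in> borel_measurable (distr M N1 V)"
      using f_measurable' by (rule PT.borel_measurable_lebesgue_integral)
    moreover have "borel_measurable (distr M N1 V) = borel_measurable N1"
      by (rule measurable_cong_sets) auto
    ultimately show "(\<lambda>v. \<integral>\<tau>. f v \<tau> \<partial>distr M N2 T) \<in> borel_measurable N1"
      by simp
  qed
  also have "\<dots> = (\<integral>\<omega>. (\<integral>\<omega>'. f (V \<omega>) (T \<omega>') \<partial>M) \<partial>M)"
  proof (intro Bochner_Integration.integral_cong refl)
    fix \<omega> assume "\<omega> \<in> space M"
    then have "(\<lambda>\<tau>. (V \<omega>, \<tau>)) \<in> measurable N2 (N1 \<Otimes>\<^sub>M N2)"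
      using V by (intro measurable_Pair measurable_const) (auto simp: measurable_space)
    from measurable_compose[OF this f_measurable]
    show "(\<integral>\<tau>. f (V \<omega>) \<tau> \<partial>distr M N2 T) = (\<integral>\<omega>'. f (V \<omega>) (T \<omega>') \<partial>M)"
      by (intro integral_distr[OF T]) simp
  qed
  finally show ?thesis .
qed

lemma (in prob_space) integral_cos_sin_sq_le_1:
  fixes f :: "'a \<Rightarrow> real"
  assumes [measurable]: "f \<in> borel_measurable M"
  shows "(\<integral>\<omega>. cos (f \<omega>) \<partial>M)\<^sup>2 + (\<integral>\<omega>. sin (f \<omega>) \<partial>M)\<^sup>2 \<le> 1"
proof -
  have sq_le: "(expectation g)\<^sup>2 \<le> expectation (\<lambda>\<omega>. (g \<omega>)\<^sup>2)"
    if [measurable]: "g \<in> borel_measurable M" and "\<And>\<omega>. \<bar>g \<omega>\<bar> \<le> 1" for g :: "'a \<Rightarrow> real"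
  proof -
    have "integrable M g" "integrable M (\<lambda>\<omega>. (g \<omega>)\<^sup>2)"
      using that(2) by (auto intro!: integrable_const_bound[where B=1] simp: abs_square_le_1)
    then show ?thesis using variance_eq[of g] variance_positive[of g] by simp
  qed
  have "integrable M (\<lambda>\<omega>. (cos (f \<omega>))\<^sup>2)"
    by (rule integrable_const_bound[where B=1]) (simp add: abs_square_le_1, measurable)
  moreover have "integrable M (\<lambda>\<omega>. (sin (f \<omega>))\<^sup>2)"
    by (rule integrable_const_bound[where B=1]) (simp add: abs_square_le_1, measurable)
  ultimately have "expectation (\<lambda>\<omega>. (cos (f \<omega>))\<^sup>2) + expectation (\<lambda>\<omega>. (sin (f \<omega>))\<^sup>2) = 1"
    by (simp add: prob_space flip: Bochner_Integration.integral_add)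
  then show ?thesis
    using sq_le[of "\<lambda>\<omega>. cos (f \<omega>)"] sq_le[of "\<lambda>\<omega>. sin (f \<omega>)"] by (simp add: prob_space)
qed

lemma (in prob_space) integral_cos_ge_of_AE_cos_eq_1:
  fixes f :: "'a \<Rightarrow> real"
  assumes [measurable]: "f \<in> borel_measurable M" "B \<in> events"
    and cos_1: "AE \<omega> in M. \<omega> \<notin> B \<longrightarrow> cos (f \<omega>) = 1"
  shows "1 - 2 * prob B \<le> (\<integral>\<omega>. cos (f \<omega>) \<partial>M)"
proof -
  have B_integrable: "integrable M (indicator B :: 'a \<Rightarrow> real)"
    by (intro integrable_real_indicator) (simp_all add: less_top[symmetric])
  have "AE \<omega> in M. 1 - 2 * indicator B \<omega> \<le> cos (f \<omega>)"
    using cos_1 by eventually_elim (simp add: indicator_def)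
  moreover have "integrable M (\<lambda>\<omega>. cos (f \<omega>))"
    by (rule integrable_const_bound[where B=1]) (simp, measurable)
  ultimately have "(\<integral>\<omega>. 1 - 2 * indicator B \<omega> \<partial>M) \<le> (\<integral>\<omega>. cos (f \<omega>) \<partial>M)"
    using B_integrable by (intro integral_mono_AE) auto
  also have "(\<integral>\<omega>. 1 - 2 * indicator B \<omega> \<partial>M) = 1 - 2 * prob B"
    using B_integrable by (simp add: prob_space)
  finally show ?thesis by simp
qed

lemma (in prob_space) tendsto_prob_greater_at_top:
  fixes Z :: "'a \<Rightarrow> real"
  assumes [measurable]: "Z \<in> borel_measurable M"
  shows "((\<lambda>x. prob {\<omega> \<in> space M. x < Z \<omega>}) \<longlongrightarrow> 0) at_top"
proof -
  have "prob {\<omega> \<in> space M. x < Z \<omega>} = 1 - cdf (distr M borel Z) x" for x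
  proof -
    have "space M - {\<omega> \<in> space M. Z \<omega> \<le> x} = {\<omega> \<in> space M. x < Z \<omega>}" by auto
    then have "prob {\<omega> \<in> space M. x < Z \<omega>} = 1 - prob {\<omega> \<in> space M. Z \<omega> \<le> x}"
      using prob_compl[of "{\<omega> \<in> space M. Z \<omega> \<le> x}"] by simp
    moreover have "cdf (distr M borel Z) x = prob {\<omega> \<in> space M. Z \<omega> \<le> x}"
      unfolding cdf_def by (subst measure_distr) (auto simp: vimage_def Int_def conj_commute)
    ultimately show ?thesis by simp
  qed
  moreover have "((\<lambda>x. 1 - cdf (distr M borel Z) x) \<longlongrightarrow> 1 - 1) at_top"
    by (intro tendsto_intros real_distribution.cdf_lim_at_top_prob real_distribution_distr) simp
  ultimately show ?thesis by simp
qed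

lemma (in prob_space) tendsto_prob_partial_sum_exceeds:
  assumes [measurable]: "\<And>i. Xs i \<in> borel_measurable M"
  shows "((\<lambda>x. prob {\<omega> \<in> space M. \<exists>j\<in>{1..k}. x < psum Xs j \<omega>}) \<longlongrightarrow> 0) at_top"
proof (rule tendsto_sandwich[OF _ _ tendsto_const])
  have "((\<lambda>x. \<Sum>j\<in>{1..k}. prob {\<omega> \<in> space M. x < psum Xs j \<omega>}) \<longlongrightarrow> (\<Sum>j\<in>{1..k}. 0)) at_top"
    by (intro tendsto_sum tendsto_prob_greater_at_top) measurable
  then show "((\<lambda>x. \<Sum>j\<in>{1..k}. prob {\<omega> \<in> space M. x < psum Xs j \<omega>}) \<longlongrightarrow> 0) at_top"
    by simp
  show "\<forall>\<^sub>F x in at_top. prob {\<omega> \<in> space M. \<exists>j\<in>{1..k}. x < psum Xs j \<omega>}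
      \<le> (\<Sum>j\<in>{1..k}. prob {\<omega> \<in> space M. x < psum Xs j \<omega>})"
  proof (intro always_eventually allI)
    fix x
    have "{\<omega> \<in> space M. \<exists>j\<in>{1..k}. x < psum Xs j \<omega>} = (\<Union>j\<in>{1..k}. {\<omega> \<in> space M. x < psum Xs j \<omega>})"
      by auto
    then show "prob {\<omega> \<in> space M. \<exists>j\<in>{1..k}. x < psum Xs j \<omega>}
        \<le> (\<Sum>j\<in>{1..k}. prob {\<omega> \<in> space M. x < psum Xs j \<omega>})"
      by (simp only:) (intro measure_UNION_le; measurable)
  qed
qed simp

lemma (in sigma_finite_subalgebra) integral_abs_real_cond_exp_le:
  assumes h: "integrable M h"
  shows "(\<integral>x. \<bar>real_cond_exp M F h x\<bar> \<partial>M) \<le> (\<integral>x. \<bar>h x\<bar> \<partial>M)"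
proof -
  have "AE x in M. real_cond_exp M F h x \<le> real_cond_exp M F (\<lambda>x. \<bar>h x\<bar>) x"
    and "AE x in M. real_cond_exp M F (\<lambda>x. - h x) x \<le> real_cond_exp M F (\<lambda>x. \<bar>h x\<bar>) x"
    using h by (auto intro!: real_cond_exp_mono)
  moreover have "AE x in M. real_cond_exp M F (\<lambda>x. (-1) * h x) x = (-1) * real_cond_exp M F h x"
    by (rule real_cond_exp_cmult[OF h])
  ultimately have "AE x in M. \<bar>real_cond_exp M F h x\<bar> \<le> real_cond_exp M F (\<lambda>x. \<bar>h x\<bar>) x"
    by eventually_elim auto
  then have "(\<integral>x. \<bar>real_cond_exp M F h x\<bar> \<partial>M) \<le> (\<integral>x. real_cond_exp M F (\<lambda>x. \<bar>h x\<bar>) x \<partial>M)"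
    using h by (intro integral_mono_AE real_cond_exp_int(1) integrable_abs) auto
  also have "\<dots> = (\<integral>x. \<bar>h x\<bar> \<partial>M)"
    using h by (intro real_cond_exp_int(2)) auto
  finally show ?thesis .
qed

lemma (in sigma_finite_subalgebra) integral_abs_diff_real_cond_exp_le:
  assumes f: "integrable M f" and g: "integrable M g"
  shows "(\<integral>x. \<bar>real_cond_exp M F f x - real_cond_exp M F g x\<bar> \<partial>M) \<le> (\<integral>x. \<bar>f x - g x\<bar> \<partial>M)"
proof -
  have "AE x in M. real_cond_exp M F (\<lambda>x. f x - g x) x = real_cond_exp M F f x - real_cond_exp M F g x"
    using f g by (rule real_cond_exp_diff)
  then have "AE x in M. \<bar>real_cond_exp M F f x - real_cond_exp M F g x\<bar>
      = \<bar>real_cond_exp M F (\<lambda>x. f x - g x) x\<bar>"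
    by eventually_elim simp
  then have "(\<integral>x. \<bar>real_cond_exp M F f x - real_cond_exp M F g x\<bar> \<partial>M)
      = (\<integral>x. \<bar>real_cond_exp M F (\<lambda>x. f x - g x) x\<bar> \<partial>M)"
    using f g by (intro integral_cong_AE) auto
  also have "\<dots> \<le> (\<integral>x. \<bar>f x - g x\<bar> \<partial>M)"
    using f g by (intro integral_abs_real_cond_exp_le) auto
  finally show ?thesis .
qed

lemma (in prob_space) sigma_finite_subalgebra_vimage:
  assumes "U \<in> borel_measurable M"
  shows "sigma_finite_subalgebra M (vimage_algebra (space M) U borel)"
proof -
  have "sets (vimage_algebra (space M) U borel) \<subseteq> sets M"
    using assms by (intro sets_image_in_sets) auto
  then have "subalgebra M (vimage_algebra (space M) U borel)"
    unfolding subalgebra_def by simp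
  then show ?thesis
    by (intro finite_measure_subalgebra_is_sigma_finite) (unfold_locales, assumption)
qed

lemma integrable_cmod_Complex:
  assumes "integrable M f" "integrable M g"
  shows "integrable M (\<lambda>\<omega>. cmod (Complex (f \<omega>) (g \<omega>)))"
proof (rule Bochner_Integration.integrable_bound[where f = "\<lambda>\<omega>. \<bar>f \<omega>\<bar> + \<bar>g \<omega>\<bar>"])
  show "integrable M (\<lambda>\<omega>. \<bar>f \<omega>\<bar> + \<bar>g \<omega>\<bar>)" using assms by auto
  have [measurable]: "f \<in> borel_measurable M" "g \<in> borel_measurable M" using assms by auto
  show "(\<lambda>\<omega>. cmod (Complex (f \<omega>) (g \<omega>))) \<in> borel_measurable M"
    unfolding complex_norm by measurable
  show "AE \<omega> in M. norm (cmod (Complex (f \<omega>) (g \<omega>))) \<le> norm (\<bar>f \<omega>\<bar> + \<bar>g \<omega>\<bar>)"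
    using cmod_le[of "Complex (f _) (g _)"] by auto
qed

lemma abs_cmod_Complex_diff_le: "\<bar>cmod (Complex a b) - cmod (Complex c e)\<bar> \<le> \<bar>a - c\<bar> + \<bar>b - e\<bar>"
proof -
  have "\<bar>cmod (Complex a b) - cmod (Complex c e)\<bar> \<le> cmod (Complex a b - Complex c e)"
    by (rule norm_triangle_ineq3)
  also have "\<dots> \<le> \<bar>a - c\<bar> + \<bar>b - e\<bar>"
    using cmod_le[of "Complex a b - Complex c e"] by simp
  finally show ?thesis .
qed

lemma continuous_on_compact_less_imp_le:
  fixes F :: "'a::topological_space \<Rightarrow> real"
  assumes "continuous_on S F" "compact S" "\<And>s. s \<in> S \<Longrightarrow> F s < b"
  shows "\<exists>c<b. \<forall>s\<in>S. F s \<le> c"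
proof (cases "S = {}")
  case False
  then obtain s0 where "s0 \<in> S" "\<forall>s\<in>S. F s \<le> F s0"
    using continuous_attains_sup[OF assms(2) False assms(1)] by blast
  then show ?thesis using assms(3) by blast
next
  case True
  then show ?thesis by (intro exI[of _ "b - 1"]) simp
qed

section \<open>The mean modulus of a conditional characteristic function\<close>

text \<open>\<open>mean_norm_cond_char M U V s\<close> is \<open>E|E[exp(i s V) | U]|\<close>; the conditional characteristic
  function is split into real and imaginary parts because \<open>real_cond_exp\<close> is real-valued, and the
  \<open>let\<close> matches the form of hypothesis (2).\<close>
definition mean_norm_cond_char :: "'a measure \<Rightarrow> ('a \<Rightarrow> real) \<Rightarrow> ('a \<Rightarrow> real) \<Rightarrow> real \<Rightarrow> real" where
  "mean_norm_cond_char M U V s =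
    (let F = vimage_algebra (space M) U borel in
     \<integral>\<omega>. cmod (Complex (real_cond_exp M F (\<lambda>\<omega>. cos (s * V \<omega>)) \<omega>)
                       (real_cond_exp M F (\<lambda>\<omega>. sin (s * V \<omega>)) \<omega>)) \<partial>M)"

lemma (in prob_space) mean_norm_cond_char_diff_le:
  fixes U V :: "'a \<Rightarrow> real"
  assumes [measurable]: "U \<in> borel_measurable M" "V \<in> borel_measurable M"
  shows "\<bar>mean_norm_cond_char M U V t - mean_norm_cond_char M U V s\<bar>
    \<le> (\<integral>\<omega>. \<bar>cos (t * V \<omega>) - cos (s * V \<omega>)\<bar> + \<bar>sin (t * V \<omega>) - sin (s * V \<omega>)\<bar> \<partial>M)"
proof -
  define G where "G = vimage_algebra (space M) U borel"
  interpret G: sigma_finite_subalgebra M G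
    unfolding G_def by (rule sigma_finite_subalgebra_vimage) simp
  define C where "C r = real_cond_exp M G (\<lambda>\<omega>. cos (r * V \<omega>))" for r
  define S where "S r = real_cond_exp M G (\<lambda>\<omega>. sin (r * V \<omega>))" for r
  have cos_sin_integrable: "integrable M (\<lambda>\<omega>. cos (r * V \<omega>))" "integrable M (\<lambda>\<omega>. sin (r * V \<omega>))" for r
    by (rule integrable_const_bound[where B=1]; simp)+
  then have C_S_integrable: "integrable M (C r)" "integrable M (S r)" for r
    unfolding C_def S_def by auto
  have norm_integrable: "integrable M (\<lambda>\<omega>. cmod (Complex (C r \<omega>) (S r \<omega>)))" for r
    using C_S_integrable by (rule integrable_cmod_Complex)
  have "\<bar>mean_norm_cond_char M U V t - mean_norm_cond_char M U V s\<bar>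
      = \<bar>\<integral>\<omega>. cmod (Complex (C t \<omega>) (S t \<omega>)) - cmod (Complex (C s \<omega>) (S s \<omega>)) \<partial>M\<bar>"
    unfolding mean_norm_cond_char_def Let_def G_def[symmetric] C_def S_def
    using norm_integrable unfolding C_def S_def by simp
  also have "\<dots> \<le> (\<integral>\<omega>. \<bar>cmod (Complex (C t \<omega>) (S t \<omega>)) - cmod (Complex (C s \<omega>) (S s \<omega>))\<bar> \<partial>M)"
    by (rule integral_abs_bound)
  also have "\<dots> \<le> (\<integral>\<omega>. \<bar>C t \<omega> - C s \<omega>\<bar> + \<bar>S t \<omega> - S s \<omega>\<bar> \<partial>M)"
    by (rule integral_mono) (use norm_integrable C_S_integrable abs_cmod_Complex_diff_le in auto)
  also have "\<dots> = (\<integral>\<omega>. \<bar>C t \<omega> - C s \<omega>\<bar> \<partial>M) + (\<integral>\<omega>. \<bar>S t \<omega> - S s \<omega>\<bar> \<partial>M)"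
    using C_S_integrable by (intro Bochner_Integration.integral_add) auto
  also have "\<dots> \<le> (\<integral>\<omega>. \<bar>cos (t * V \<omega>) - cos (s * V \<omega>)\<bar> \<partial>M) + (\<integral>\<omega>. \<bar>sin (t * V \<omega>) - sin (s * V \<omega>)\<bar> \<partial>M)"
    unfolding C_def S_def using cos_sin_integrable
    by (intro add_mono G.integral_abs_diff_real_cond_exp_le)
  also have "\<dots> = (\<integral>\<omega>. \<bar>cos (t * V \<omega>) - cos (s * V \<omega>)\<bar> + \<bar>sin (t * V \<omega>) - sin (s * V \<omega>)\<bar> \<partial>M)"
    using cos_sin_integrable by (intro Bochner_Integration.integral_add[symmetric]) auto
  finally show ?thesis .
qed

lemma (in prob_space) tendsto_integral_cos_sin_diff:
  fixes V :: "'a \<Rightarrow> real"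
  assumes [measurable]: "V \<in> borel_measurable M"
  shows "((\<lambda>t. \<integral>\<omega>. \<bar>cos (t * V \<omega>) - cos (s * V \<omega>)\<bar> + \<bar>sin (t * V \<omega>) - sin (s * V \<omega>)\<bar> \<partial>M)
    \<longlongrightarrow> 0) (at s)"
proof (subst tendsto_at_iff_sequentially, intro allI impI)
  fix ts :: "nat \<Rightarrow> real" assume "ts \<longlonglongrightarrow> s"
  have bounded: "\<bar>cos a - cos b\<bar> + \<bar>sin a - sin b\<bar> \<le> 4" for a b :: real
  proof -
    have "\<bar>cos a - cos b\<bar> \<le> 2" "\<bar>sin a - sin b\<bar> \<le> 2"
      using abs_cos_le_one[of a] abs_cos_le_one[of b] abs_sin_le_one[of a] abs_sin_le_one[of b]
      by linarith+
    then show ?thesis by simp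
  qed
  have "(\<lambda>n. \<integral>\<omega>. \<bar>cos (ts n * V \<omega>) - cos (s * V \<omega>)\<bar> + \<bar>sin (ts n * V \<omega>) - sin (s * V \<omega>)\<bar> \<partial>M)
      \<longlonglongrightarrow> (\<integral>\<omega>. 0 \<partial>M)"
  proof (rule integral_dominated_convergence[where w = "\<lambda>_. 4"])
    show "AE \<omega> in M. (\<lambda>n. \<bar>cos (ts n * V \<omega>) - cos (s * V \<omega>)\<bar> + \<bar>sin (ts n * V \<omega>) - sin (s * V \<omega>)\<bar>)
        \<longlonglongrightarrow> 0"
    proof (intro AE_I2)
      fix \<omega>
      have "(\<lambda>n. \<bar>cos (ts n * V \<omega>) - cos (s * V \<omega>)\<bar> + \<bar>sin (ts n * V \<omega>) - sin (s * V \<omega>)\<bar>)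
          \<longlonglongrightarrow> \<bar>cos (s * V \<omega>) - cos (s * V \<omega>)\<bar> + \<bar>sin (s * V \<omega>) - sin (s * V \<omega>)\<bar>"
        using \<open>ts \<longlonglongrightarrow> s\<close> by (intro tendsto_intros)
      then show "(\<lambda>n. \<bar>cos (ts n * V \<omega>) - cos (s * V \<omega>)\<bar> + \<bar>sin (ts n * V \<omega>) - sin (s * V \<omega>)\<bar>)
          \<longlonglongrightarrow> 0"
        by simp
    qed
    show "AE \<omega> in M. norm (\<bar>cos (ts n * V \<omega>) - cos (s * V \<omega>)\<bar> + \<bar>sin (ts n * V \<omega>) - sin (s * V \<omega>)\<bar>) \<le> 4"
      for n
      using bounded by (intro AE_I2) simp
  qed auto
  then show "((\<lambda>t. \<integral>\<omega>. \<bar>cos (t * V \<omega>) - cos (s * V \<omega>)\<bar> + \<bar>sin (t * V \<omega>) - sin (s * V \<omega>)\<bar> \<partial>M)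
      \<circ> ts) \<longlonglongrightarrow> 0"
    by (simp add: comp_def)
qed

lemma (in prob_space) continuous_mean_norm_cond_char:
  fixes U V :: "'a \<Rightarrow> real"
  assumes [measurable]: "U \<in> borel_measurable M" "V \<in> borel_measurable M"
  shows "continuous_on UNIV (mean_norm_cond_char M U V)"
proof (intro continuous_at_imp_continuous_on ballI)
  fix s
  have "\<forall>t. norm (mean_norm_cond_char M U V t - mean_norm_cond_char M U V s)
      \<le> (\<integral>\<omega>. \<bar>cos (t * V \<omega>) - cos (s * V \<omega>)\<bar> + \<bar>sin (t * V \<omega>) - sin (s * V \<omega>)\<bar> \<partial>M)"
    using mean_norm_cond_char_diff_le[of U V _ s] by simp
  from Lim_null_comparison[OF always_eventually[OF this] tendsto_integral_cos_sin_diff[OF assms(2)]]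
  have "((\<lambda>t. mean_norm_cond_char M U V t - mean_norm_cond_char M U V s) \<longlongrightarrow> 0) (at s)"
    by simp
  then show "isCont (mean_norm_cond_char M U V) s"
    unfolding isCont_def by (simp add: LIM_zero_iff)
qed

lemma (in prob_space) mean_norm_cond_char_bounded_away_from_1:
  fixes U V :: "'a \<Rightarrow> real"
  assumes "U \<in> borel_measurable M" "V \<in> borel_measurable M" and "0 < d"
    and less_1: "\<And>s. 0 < s \<Longrightarrow> s \<le> pi / d \<Longrightarrow> mean_norm_cond_char M U V s < 1"
  shows "\<exists>c<1. \<forall>s\<in>{pi / (2 * d)..pi / d}. mean_norm_cond_char M U V s \<le> c"
proof (rule continuous_on_compact_less_imp_le)
  show "continuous_on {pi / (2 * d)..pi / d} (mean_norm_cond_char M U V)"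
    using assms(1,2) by (intro continuous_on_subset[OF continuous_mean_norm_cond_char]) auto
  have "0 < pi / (2 * d)" using \<open>0 < d\<close> by simp
  then show "mean_norm_cond_char M U V s < 1" if "s \<in> {pi / (2 * d)..pi / d}" for s
    using that by (intro less_1) auto
qed simp

lemma (in prob_space) integral_le_mean_norm_cond_char:
  fixes U V :: "'a \<Rightarrow> real"
  assumes [measurable]: "U \<in> borel_measurable M" "V \<in> borel_measurable M"
      "u1 \<in> borel_measurable borel" "u2 \<in> borel_measurable borel"
    and unit: "\<And>a. (u1 a)\<^sup>2 + (u2 a)\<^sup>2 \<le> 1"
  shows "(\<integral>\<omega>. cos (s * V \<omega>) * u1 (U \<omega>) - sin (s * V \<omega>) * u2 (U \<omega>) \<partial>M) \<le> mean_norm_cond_char M U V s"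
proof -
  define G where "G = vimage_algebra (space M) U borel"
  interpret G: sigma_finite_subalgebra M G
    unfolding G_def by (rule sigma_finite_subalgebra_vimage) simp
  define C where "C = real_cond_exp M G (\<lambda>\<omega>. cos (s * V \<omega>))"
  define S where "S = real_cond_exp M G (\<lambda>\<omega>. sin (s * V \<omega>))"
  have U_G: "U \<in> borel_measurable G"
    unfolding G_def by (rule measurable_vimage_algebra1) simp
  have "\<bar>u1 a\<bar> \<le> 1" "\<bar>u2 a\<bar> \<le> 1" for a
    using unit[of a] by (auto simp flip: abs_square_le_1 intro: order_trans[rotated])
  then have integrable: "integrable M (\<lambda>\<omega>. u1 (U \<omega>) * cos (s * V \<omega>))"
      "integrable M (\<lambda>\<omega>. u2 (U \<omega>) * sin (s * V \<omega>))"
    by (intro integrable_const_bound[where B=1]; simp add: abs_mult mult_le_one)+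
  note tower_cos = G.real_cond_exp_intg[OF integrable(1) measurable_compose[OF U_G], folded C_def]
  note tower_sin = G.real_cond_exp_intg[OF integrable(2) measurable_compose[OF U_G], folded S_def]
  have "(\<integral>\<omega>. cos (s * V \<omega>) * u1 (U \<omega>) - sin (s * V \<omega>) * u2 (U \<omega>) \<partial>M)
      = (\<integral>\<omega>. u1 (U \<omega>) * cos (s * V \<omega>) \<partial>M) - (\<integral>\<omega>. u2 (U \<omega>) * sin (s * V \<omega>) \<partial>M)"
    using integrable by (subst Bochner_Integration.integral_diff[symmetric]) (auto simp: mult.commute)
  also have "\<dots> = (\<integral>\<omega>. u1 (U \<omega>) * C \<omega> - u2 (U \<omega>) * S \<omega> \<partial>M)"
    using tower_cos tower_sin by simp
  also have "\<dots> \<le> (\<integral>\<omega>. cmod (Complex (C \<omega>) (S \<omega>)) \<partial>M)"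
  proof (rule integral_mono)
    show "integrable M (\<lambda>\<omega>. cmod (Complex (C \<omega>) (S \<omega>)))"
      unfolding C_def S_def by (intro integrable_cmod_Complex G.real_cond_exp_int(1))
        (rule integrable_const_bound[where B=1]; simp)+
    fix \<omega>
    have "u1 (U \<omega>) * C \<omega> - u2 (U \<omega>) * S \<omega> = inner (Complex (C \<omega>) (S \<omega>)) (Complex (u1 (U \<omega>)) (- u2 (U \<omega>)))"
      by (simp add: inner_complex_def)
    also have "\<dots> \<le> cmod (Complex (C \<omega>) (S \<omega>)) * cmod (Complex (u1 (U \<omega>)) (- u2 (U \<omega>)))"
      by (rule norm_cauchy_schwarz)
    also have "\<dots> \<le> cmod (Complex (C \<omega>) (S \<omega>))"
      using unit[of "U \<omega>"] by (intro mult_left_le) (auto simp: complex_norm)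
    finally show "u1 (U \<omega>) * C \<omega> - u2 (U \<omega>) * S \<omega> \<le> cmod (Complex (C \<omega>) (S \<omega>))" .
  qed (use tower_cos tower_sin in simp)
  finally show ?thesis
    unfolding mean_norm_cond_char_def Let_def G_def[symmetric] C_def S_def .
qed

section \<open>Decoupling the first \<open>k\<close> steps\<close>

text \<open>Entry 0 is never read by \<open>psum\<close> and \<open>Wsum\<close>; it is set to 0 so that \<open>coord_seq k f\<close>
  depends only on the coordinates in \<open>{k+1..}\<close>.\<close>
definition coord_seq :: "nat \<Rightarrow> ('b \<Rightarrow> real) \<Rightarrow> nat \<Rightarrow> (nat \<Rightarrow> 'b) \<Rightarrow> real" where
  "coord_seq k f i r = (if i = 0 then 0 else f (r (k + i)))"

lemma coord_seq_measurable:
  assumes "f \<in> borel_measurable N"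
  shows "coord_seq k f i \<in> borel_measurable (PiM {k+1..} (\<lambda>_. N))"
proof (cases "i = 0")
  case False
  have "(\<lambda>r. r (k + i)) \<in> measurable (PiM {k+1..} (\<lambda>_. N)) N"
    using False by (intro measurable_component_singleton) auto
  from measurable_compose[OF this assms] show ?thesis
    using False unfolding coord_seq_def[abs_def] by simp
qed (simp add: coord_seq_def[abs_def])

lemma cos_block_Wsum_measurable:
  "(\<lambda>p. cos (s * ((\<Sum>i\<in>{1..k}. snd (fst p i))
      + Wsum (coord_seq k fst) (coord_seq k snd) (x - (\<Sum>i\<in>{1..k}. fst (fst p i))) (snd p))))
    \<in> borel_measurable (PiM {1..k} (\<lambda>_. borel) \<Otimes>\<^sub>M PiM {k+1..} (\<lambda>_. borel :: (real \<times> real) measure))"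
    (is "_ \<in> borel_measurable (?N1 \<Otimes>\<^sub>M ?N2)")
proof -
  have borel_fst [measurable]: "fst \<in> borel_measurable (borel :: (real \<times> real) measure)"
    and borel_snd [measurable]: "snd \<in> borel_measurable (borel :: (real \<times> real) measure)"
    by (intro borel_measurable_continuous_onI continuous_intros)+
  have "(\<lambda>p. fst p i) \<in> measurable (?N1 \<Otimes>\<^sub>M ?N2) borel" if "i \<in> {1..k}" for i
    using that by measurable
  then have [measurable]: "(\<lambda>p. \<Sum>i\<in>{1..k}. fst (fst p i)) \<in> borel_measurable (?N1 \<Otimes>\<^sub>M ?N2)"
      "(\<lambda>p. \<Sum>i\<in>{1..k}. snd (fst p i)) \<in> borel_measurable (?N1 \<Otimes>\<^sub>M ?N2)"
    using measurable_compose[OF _ borel_fst] measurable_compose[OF _ borel_snd]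
    by (auto intro!: borel_measurable_sum)
  have "(\<lambda>p. Wsum (coord_seq k fst) (coord_seq k snd) (x - (\<Sum>i\<in>{1..k}. fst (fst p i))) (snd p))
      \<in> borel_measurable (?N1 \<Otimes>\<^sub>M ?N2)"
    by (intro Wsum_snd_measurable coord_seq_measurable borel_fst borel_snd) measurable
  then show ?thesis by measurable
qed

lemma (in prob_space) integral_cos_renewal:
  fixes Xs Ys :: "nat \<Rightarrow> 'a \<Rightarrow> real" and k :: nat and s x :: real
  assumes [measurable]: "\<And>i. Xs i \<in> borel_measurable M" "\<And>i. Ys i \<in> borel_measurable M"
    and indep: "indep_vars (\<lambda>_. borel) (\<lambda>i \<omega>. (Xs i \<omega>, Ys i \<omega>)) {1..}"
  defines "W' \<equiv> Wsum (\<lambda>i. Xs (k + i)) (\<lambda>i. Ys (k + i))"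
  shows "(\<integral>\<omega>. cos (s * (psum Ys k \<omega> + W' (x - psum Xs k \<omega>) \<omega>)) \<partial>M) =
    (\<integral>\<omega>. cos (s * psum Ys k \<omega>) * (\<integral>\<omega>'. cos (s * W' (x - psum Xs k \<omega>) \<omega>') \<partial>M)
       - sin (s * psum Ys k \<omega>) * (\<integral>\<omega>'. sin (s * W' (x - psum Xs k \<omega>) \<omega>') \<partial>M) \<partial>M)"
proof -
  define N1 where "N1 = (PiM {1..k} (\<lambda>_. borel) :: (nat \<Rightarrow> real \<times> real) measure)"
  define N2 where "N2 = (PiM {k+1..} (\<lambda>_. borel) :: (nat \<Rightarrow> real \<times> real) measure)"
  define R1 where "R1 \<omega> = restrict (\<lambda>i. (Xs i \<omega>, Ys i \<omega>)) {1..k}" for \<omega>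
  define R2 where "R2 \<omega> = restrict (\<lambda>i. (Xs i \<omega>, Ys i \<omega>)) {k+1..}" for \<omega>
  have independent: "indep_var N1 R1 N2 R2"
    unfolding N1_def N2_def R1_def R2_def by (rule indep_var_restrict[OF indep]) auto
  define f where "f r1 r2 = cos (s * ((\<Sum>i\<in>{1..k}. snd (r1 i))
      + Wsum (coord_seq k fst) (coord_seq k snd) (x - (\<Sum>i\<in>{1..k}. fst (r1 i))) r2))"
    for r1 r2 :: "nat \<Rightarrow> real \<times> real"
  have f_measurable: "(\<lambda>p. f (fst p) (snd p)) \<in> borel_measurable (N1 \<Otimes>\<^sub>M N2)"
    unfolding f_def N1_def N2_def by (rule cos_block_Wsum_measurable)
  have R1_sums: "(\<Sum>i\<in>{1..k}. snd (R1 \<omega> i)) = psum Ys k \<omega>" "(\<Sum>i\<in>{1..k}. fst (R1 \<omega> i)) = psum Xs k \<omega>"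
    for \<omega> unfolding R1_def psum_def by (auto intro: sum.cong)
  have R2_Wsum: "Wsum (coord_seq k fst) (coord_seq k snd) y (R2 \<omega>) = W' y \<omega>" for y \<omega>
    unfolding W'_def by (rule Wsum_cong) (auto simp: coord_seq_def R2_def)
  have "(\<integral>\<omega>. cos (s * (psum Ys k \<omega> + W' (x - psum Xs k \<omega>) \<omega>)) \<partial>M) = (\<integral>\<omega>. f (R1 \<omega>) (R2 \<omega>) \<partial>M)"
    unfolding f_def R1_sums R2_Wsum ..
  also have "\<dots> = (\<integral>\<omega>. (\<integral>\<omega>'. f (R1 \<omega>) (R2 \<omega>') \<partial>M) \<partial>M)"
    by (rule integral_indep_var_iterated[OF independent f_measurable, where C = 1]) (simp add: f_def)
  also have "\<dots> = (\<integral>\<omega>. cos (s * psum Ys k \<omega>) * (\<integral>\<omega>'. cos (s * W' (x - psum Xs k \<omega>) \<omega>') \<partial>M)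
       - sin (s * psum Ys k \<omega>) * (\<integral>\<omega>'. sin (s * W' (x - psum Xs k \<omega>) \<omega>') \<partial>M) \<partial>M)"
  proof (intro Bochner_Integration.integral_cong refl)
    fix \<omega>
    have [measurable]: "W' (x - psum Xs k \<omega>) \<in> borel_measurable M"
      unfolding W'_def by (rule Wsum_measurable) measurable
    have "integrable M (\<lambda>\<omega>'. cos (s * W' (x - psum Xs k \<omega>) \<omega>'))"
        "integrable M (\<lambda>\<omega>'. sin (s * W' (x - psum Xs k \<omega>) \<omega>'))"
      by (rule integrable_const_bound[where B=1]; simp; measurable)+
    then show "(\<integral>\<omega>'. f (R1 \<omega>) (R2 \<omega>') \<partial>M) = cos (s * psum Ys k \<omega>) * (\<integral>\<omega>'. cos (s * W' (x - psum Xs k \<omega>) \<omega>') \<partial>M)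
       - sin (s * psum Ys k \<omega>) * (\<integral>\<omega>'. sin (s * W' (x - psum Xs k \<omega>) \<omega>') \<partial>M)"
      unfolding f_def R1_sums R2_Wsum by (simp add: distrib_left cos_add)
  qed
  finally show ?thesis .
qed

lemma AE_Wsum_split:
  assumes drift: "AE \<omega> in M. (SUP n\<in>{1..}. ereal (psum Xs n \<omega>)) = \<infinity>"
  shows "AE \<omega> in M. (\<forall>j\<in>{1..k}. psum Xs j \<omega> \<le> x) \<longrightarrow>
    Wsum Xs Ys x \<omega> = psum Ys k \<omega> + Wsum (\<lambda>i. Xs (k + i)) (\<lambda>i. Ys (k + i)) (x - psum Xs k \<omega>) \<omega>"
  using drift
proof eventually_elim
  case (elim \<omega>)
  then have "ereal x < (SUP n\<in>{1..}. ereal (psum Xs n \<omega>))" by simp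
  then obtain n0 where "n0 \<ge> 1" "x < psum Xs n0 \<omega>" by (auto simp: less_SUP_iff)
  then show ?case using Wsum_split[of k Xs \<omega> x n0 Ys] by blast
qed

lemma (in prob_space) mean_norm_cond_char_ge_of_cos_Wsum:
  fixes Xs Ys :: "nat \<Rightarrow> 'a \<Rightarrow> real" and k :: nat and s x :: real
  assumes [measurable]: "\<And>i. Xs i \<in> borel_measurable M" "\<And>i. Ys i \<in> borel_measurable M"
    and indep: "indep_vars (\<lambda>_. borel) (\<lambda>i \<omega>. (Xs i \<omega>, Ys i \<omega>)) {1..}"
    and drift: "AE \<omega> in M. (SUP n\<in>{1..}. ereal (psum Xs n \<omega>)) = \<infinity>"
    and cos_1: "AE \<omega> in M. cos (s * Wsum Xs Ys x \<omega>) = 1"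
  shows "1 - 2 * prob {\<omega> \<in> space M. \<exists>j\<in>{1..k}. x < psum Xs j \<omega>}
    \<le> mean_norm_cond_char M (psum Xs k) (psum Ys k) s"
proof -
  define W' where "W' = Wsum (\<lambda>i. Xs (k + i)) (\<lambda>i. Ys (k + i))"
  define u1 where "u1 a = (\<integral>\<omega>. cos (s * W' (x - a) \<omega>) \<partial>M)" for a
  define u2 where "u2 a = (\<integral>\<omega>. sin (s * W' (x - a) \<omega>) \<partial>M)" for a
  have [measurable]: "(\<lambda>p. W' (x - fst p) (snd p)) \<in> borel_measurable (borel \<Otimes>\<^sub>M M)"
    unfolding W'_def by (rule Wsum_snd_measurable) measurable
  have cos_measurable: "(\<lambda>(a, \<omega>). cos (s * W' (x - a) \<omega>)) \<in> borel_measurable (borel \<Otimes>\<^sub>M M)"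
    and sin_measurable: "(\<lambda>(a, \<omega>). sin (s * W' (x - a) \<omega>)) \<in> borel_measurable (borel \<Otimes>\<^sub>M M)"
    unfolding case_prod_beta' by measurable
  have [measurable]: "u1 \<in> borel_measurable borel" "u2 \<in> borel_measurable borel"
    unfolding u1_def u2_def
    using borel_measurable_lebesgue_integral[OF cos_measurable]
      borel_measurable_lebesgue_integral[OF sin_measurable] by simp_all
  have [measurable]: "W' y \<in> borel_measurable M" for y
    unfolding W'_def by (rule Wsum_measurable) measurable
  have [measurable]: "(\<lambda>\<omega>. W' (x - psum Xs k \<omega>) \<omega>) \<in> borel_measurable M"
    unfolding W'_def by (rule Wsum_measurable) measurable
  have "1 - 2 * prob {\<omega> \<in> space M. \<exists>j\<in>{1..k}. x < psum Xs j \<omega>}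
      \<le> (\<integral>\<omega>. cos (s * (psum Ys k \<omega> + W' (x - psum Xs k \<omega>) \<omega>)) \<partial>M)"
  proof (rule integral_cos_ge_of_AE_cos_eq_1)
    show "AE \<omega> in M. \<omega> \<notin> {\<omega> \<in> space M. \<exists>j\<in>{1..k}. x < psum Xs j \<omega>} \<longrightarrow>
        cos (s * (psum Ys k \<omega> + W' (x - psum Xs k \<omega>) \<omega>)) = 1"
      using AE_Wsum_split[OF drift, of k x Ys] cos_1 AE_space
      by eventually_elim (auto simp: W'_def not_less)
  qed measurable
  also have "\<dots> = (\<integral>\<omega>. cos (s * psum Ys k \<omega>) * u1 (psum Xs k \<omega>) - sin (s * psum Ys k \<omega>) * u2 (psum Xs k \<omega>) \<partial>M)"
    unfolding u1_def u2_def W'_def by (rule integral_cos_renewal[OF _ _ indep]) simp_all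
  also have "\<dots> \<le> mean_norm_cond_char M (psum Xs k) (psum Ys k) s"
  proof (rule integral_le_mean_norm_cond_char)
    show "(u1 a)\<^sup>2 + (u2 a)\<^sup>2 \<le> 1" for a
      unfolding u1_def u2_def by (rule integral_cos_sin_sq_le_1) measurable
  qed measurable
  finally show ?thesis .
qed

lemma (in prob_space) has_span_Wsum_of_small_exceedance:
  fixes Xs Ys :: "nat \<Rightarrow> 'a \<Rightarrow> real" and k :: nat and d x :: real
  assumes meas: "\<And>i. Xs i \<in> borel_measurable M" "\<And>i. Ys i \<in> borel_measurable M"
    and indep: "indep_vars (\<lambda>_. borel) (\<lambda>i \<omega>. (Xs i \<omega>, Ys i \<omega>)) {1..}"
    and drift: "AE \<omega> in M. (SUP n\<in>{1..}. ereal (psum Xs n \<omega>)) = \<infinity>"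
    and "0 < d" and d_lattice: "AE \<omega> in M. \<exists>k::int. Wsum Xs Ys x \<omega> = d * of_int k"
    and small: "\<And>s. s \<in> {pi / (2 * d)..pi / d} \<Longrightarrow> mean_norm_cond_char M (psum Xs k) (psum Ys k) s
      < 1 - 2 * prob {\<omega> \<in> space M. \<exists>j\<in>{1..k}. x < psum Xs j \<omega>}"
  shows "has_span M (Wsum Xs Ys x) d"
proof -
  have "t \<le> d" if t_lattice: "lattice_ok M (Wsum Xs Ys x) t" for t
  proof (rule ccontr)
    assume "\<not> t \<le> d"
    then have "d < t" by simp
    moreover have "AE \<omega> in M. \<exists>k::int. Wsum Xs Ys x \<omega> = t * of_int k"
      using t_lattice unfolding lattice_ok_def by blast
    ultimately have "\<exists>s\<in>{pi / (2 * d)..pi / d}. AE \<omega> in M. cos (s * Wsum Xs Ys x \<omega>) = 1"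
      by (rule frequency_annihilating_two_lattices[OF \<open>0 < d\<close> _ _ d_lattice])
    then obtain s where s: "s \<in> {pi / (2 * d)..pi / d}" and "AE \<omega> in M. cos (s * Wsum Xs Ys x \<omega>) = 1"
      by blast
    then have "1 - 2 * prob {\<omega> \<in> space M. \<exists>j\<in>{1..k}. x < psum Xs j \<omega>}
        \<le> mean_norm_cond_char M (psum Xs k) (psum Ys k) s"
      by (intro mean_norm_cond_char_ge_of_cos_Wsum[OF meas indep drift])
    with small[OF s] show False by linarith
  qed
  then show ?thesis using d_lattice \<open>0 < d\<close> unfolding has_span_def lattice_ok_def by blast
qed

theorem lemma4p3:
  fixes M :: "'a measure"
    and X Y :: "'a \<Rightarrow> real"
    and Xs Ys :: "nat \<Rightarrow> 'a \<Rightarrow> real"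
    and d \<tau>0 :: real
    and \<Phi> \<Psi> :: "real measure"
  assumes P: "prob_space M"
    and X_meas: "X \<in> borel_measurable M" and Y_meas: "Y \<in> borel_measurable M"
    and Xs_meas: "\<And>i. Xs i \<in> borel_measurable M" and Ys_meas: "\<And>i. Ys i \<in> borel_measurable M"
    and indep: "prob_space.indep_vars M (\<lambda>_. borel) (\<lambda>i \<omega>. (Xs i \<omega>, Ys i \<omega>)) {1..}"
    and ident: "\<And>i. i \<ge> 1 \<Longrightarrow>
        distr M borel (\<lambda>\<omega>. (Xs i \<omega>, Ys i \<omega>)) = distr M borel (\<lambda>\<omega>. (X \<omega>, Y \<omega>))"
    and X_nondeg: "\<not> (\<exists>c. AE \<omega> in M. X \<omega> = c)"
    and Y_nondeg: "\<not> (\<exists>c. AE \<omega> in M. Y \<omega> = c)"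
    and drift: "AE \<omega> in M. (SUP n\<in>{1..}. ereal (psum Xs n \<omega>)) = \<infinity>"
    and span: "has_span M Y d"
    and tau_pos: "\<tau>0 > 0"
    and h_range: "betaX M X < hfun M X Y \<tau>0" "hfun M X Y \<tau>0 < \<infinity>"
    and inf_lt: "(INF s. \<integral>\<^sup>+ \<omega>. ennreal (exp (\<tau>0 * Y \<omega> + s * X \<omega>)) \<partial>M) < 1"
    \<comment> \<open>(1)\<close>
    and Phi_sets: "sets \<Phi> = sets borel" and Psi_sets: "sets \<Psi> = sets borel"
    and law_split: "\<And>A. A \<in> sets borel \<Longrightarrow>
        emeasure (distr M borel X) A = emeasure \<Phi> A + emeasure \<Psi> A"
    and Phi_pos: "emeasure \<Phi> UNIV > 0"
    and Phi_C2: "\<exists>\<phi> \<phi>' \<phi>''. \<Phi> = density lborel (\<lambda>x. ennreal (\<phi> x)) \<and> (\<forall>x. \<phi> x \<ge> 0) \<and>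
        (\<forall>x. (\<phi> has_real_derivative \<phi>' x) (at x)) \<and>
        (\<forall>x. (\<phi>' has_real_derivative \<phi>'' x) (at x)) \<and> continuous_on UNIV \<phi>''"
    \<comment> \<open>(2) and (3)\<close>
    and cond23: "\<exists>(k::nat) \<eta>0. \<eta>0 > 0 \<and>
        (\<forall>s. 0 < s \<and> s \<le> pi / d \<longrightarrow>
          (let F = vimage_algebra (space M) (psum Xs k) borel in
           (\<integral>\<omega>. cmod (Complex (real_cond_exp M F (\<lambda>\<omega>. cos (s * psum Ys k \<omega>)) \<omega>)
                               (real_cond_exp M F (\<lambda>\<omega>. sin (s * psum Ys k \<omega>)) \<omega>)) \<partial>M) < 1)) \<and>
        (\<integral>\<^sup>+ \<omega>. ennreal (exp (- real_of_ereal (hfun M X Y \<tau>0) * X \<omega> + \<tau>0 * Y \<omega>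
                              + \<eta>0 * (\<bar>X \<omega>\<bar> + \<bar>Y \<omega>\<bar>))) \<partial>M) < \<infinity> \<and>
        (\<exists>g g1 g2 :: real \<Rightarrow> real \<Rightarrow> real.
           (\<forall>t\<in>{\<tau>0 - \<eta>0 <..< \<tau>0 + \<eta>0}. cond_version M X (\<lambda>\<omega>. exp (t * Y \<omega>)) (g t)) \<and>
           (\<forall>t\<in>{\<tau>0 - \<eta>0 <..< \<tau>0 + \<eta>0}. \<forall>x\<in>interior (msupport \<Phi>).
              (g t has_real_derivative g1 t x) (at x) \<and> (g1 t has_real_derivative g2 t x) (at x)) \<and>
           continuous_on ({\<tau>0 - \<eta>0 <..< \<tau>0 + \<eta>0} \<times> interior (msupport \<Phi>)) (\<lambda>(t, x). g t x) \<and>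
           continuous_on ({\<tau>0 - \<eta>0 <..< \<tau>0 + \<eta>0} \<times> interior (msupport \<Phi>)) (\<lambda>(t, x). g1 t x) \<and>
           continuous_on ({\<tau>0 - \<eta>0 <..< \<tau>0 + \<eta>0} \<times> interior (msupport \<Phi>)) (\<lambda>(t, x). g2 t x))"
    \<comment> \<open>(4)\<close>
    and cond4: "measure M {\<omega> \<in> space M. X \<omega> \<ge> 0} < 1 \<Longrightarrow>
        (\<forall>q>0. cond_exp_event M
             (\<lambda>\<omega>. exp (q * (\<tau>0 * Y \<omega> - min 0 (real_of_ereal (hfun M X Y \<tau>0)) * X \<omega>)))
             {\<omega> \<in> space M. X \<omega> > 0} < \<infinity>)"
  shows "\<forall>\<^sub>F x in at_top. has_span M (Wsum Xs Ys x) d"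
proof -
  interpret prob_space M by (rule P)
  have "d > 0" and Y_lattice: "AE \<omega> in M. \<exists>k::int. Y \<omega> = d * of_int k"
    using span unfolding has_span_def lattice_ok_def by auto
  have "AE \<omega> in M. \<forall>i\<in>{1..}. \<exists>k::int. Ys i \<omega> = d * of_int k"
    using ident by (rule AE_identically_distributed_lattice[OF X_meas Y_meas Xs_meas Ys_meas _ Y_lattice])
  then have W_lattice: "AE \<omega> in M. \<exists>k::int. Wsum Xs Ys x \<omega> = d * of_int k" for x
    by eventually_elim (auto simp: Wsum_def intro: sum_in_lattice)
  obtain k :: nat where F_lt_1: "\<And>s. 0 < s \<Longrightarrow> s \<le> pi / d \<Longrightarrow>
      mean_norm_cond_char M (psum Xs k) (psum Ys k) s < 1"
    using cond23 unfolding mean_norm_cond_char_def Let_def by blast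
  obtain c where "c < 1" and F_le_c: "\<And>s. s \<in> {pi / (2 * d)..pi / d} \<Longrightarrow>
      mean_norm_cond_char M (psum Xs k) (psum Ys k) s \<le> c"
    using mean_norm_cond_char_bounded_away_from_1[OF psum_measurable[OF Xs_meas]
        psum_measurable[OF Ys_meas] \<open>d > 0\<close> F_lt_1] by blast
  have "((\<lambda>x. 2 * prob {\<omega> \<in> space M. \<exists>j\<in>{1..k}. x < psum Xs j \<omega>}) \<longlongrightarrow> 2 * 0) at_top"
    by (intro tendsto_mult tendsto_const tendsto_prob_partial_sum_exceeds Xs_meas)
  then have "\<forall>\<^sub>F x in at_top. 2 * prob {\<omega> \<in> space M. \<exists>j\<in>{1..k}. x < psum Xs j \<omega>} < 1 - c"
    using \<open>c < 1\<close> by (intro order_tendstoD(2)) auto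
  then show ?thesis
  proof eventually_elim
    case (elim x)
    have "mean_norm_cond_char M (psum Xs k) (psum Ys k) s
        < 1 - 2 * prob {\<omega> \<in> space M. \<exists>j\<in>{1..k}. x < psum Xs j \<omega>}" if "s \<in> {pi / (2 * d)..pi / d}" for s
      using F_le_c[OF that] elim by linarith
    then show ?case
      by (rule has_span_Wsum_of_small_exceedance[OF Xs_meas Ys_meas indep drift \<open>d > 0\<close> W_lattice])
  qed
qed

end
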